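(* If $G$ is a finite metacyclic group, then Ganea's homomorphism $H_1(G)\otimes Z(G)\rightarrow H_2(G)$ is an epimorphism.
   Context: A group $G$ is metacyclic if it has a normal cyclic subgroup $K$ with $G/K$ cyclic. $Z(G)$ is the center of $G$ and $H_i$ denotes integral homology. For the central subgroup $Z(G)$ there is Ganea's exact sequence $$H_1(G)\otimes Z(G)\to H_2(G)\to H_2(G/Z(G))\to Z(G)\to H_1(G)\to H_1(G/Z(G))\to 0,$$ and Ganea's homomorphism is its first map $H_1(G)\otimes Z(G)\to H_2(G)$. *)

theory Defs
  imports "HOL-Algebra.Algebra"
begin

definition group_center :: "('a, 'b) monoid_scheme \<Rightarrow> 'a set" where
  "group_center G = {z \<in> carrier G. \<forall>g \<in> carrier G. z \<otimes>\<^bsub>G\<^esub> g = g \<otimes>\<^bsub>G\<^esub> z}"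

definition metacyclic :: "('a, 'b) monoid_scheme \<Rightarrow> bool" where
  "metacyclic G \<longleftrightarrow> (\<exists>K. K \<lhd> G \<and> cyclic_group (subgroup_generated G K)
                          \<and> cyclic_group (G Mod K))"

text \<open>Chains of the (inhomogeneous, unnormalised) bar complex with integer
coefficients: C_n(G) is the free abelian group on n-tuples of group elements,
represented as integer-valued functions supported on (carrier G)^n.  Since the
groups considered are finite, all sums below are finite sums over carriers.\<close>

definition chains2 :: "('a, 'b) monoid_scheme \<Rightarrow> ('a \<times> 'a \<Rightarrow> int) set" where
  "chains2 G = {c. \<forall>p. c p \<noteq> 0 \<longrightarrow> p \<in> carrier G \<times> carrier G}"

definition chains3 :: "('a, 'b) monoid_scheme \<Rightarrow> ('a \<times> 'a \<times> 'a \<Rightarrow> int) set" where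
  "chains3 G = {c. \<forall>p. c p \<noteq> 0 \<longrightarrow> p \<in> carrier G \<times> carrier G \<times> carrier G}"

definition bd2 :: "('a, 'b) monoid_scheme \<Rightarrow> ('a \<times> 'a \<Rightarrow> int) \<Rightarrow> ('a \<Rightarrow> int)" where
  "bd2 G c = (\<lambda>x. \<Sum>p \<in> carrier G \<times> carrier G.
      c p * ((if snd p = x then 1 else 0) - (if fst p \<otimes>\<^bsub>G\<^esub> snd p = x then 1 else 0)
             + (if fst p = x then 1 else 0)))"

definition bd3 :: "('a, 'b) monoid_scheme \<Rightarrow> ('a \<times> 'a \<times> 'a \<Rightarrow> int) \<Rightarrow> ('a \<times> 'a \<Rightarrow> int)" where
  "bd3 G d = (\<lambda>q. \<Sum>p \<in> carrier G \<times> carrier G \<times> carrier G.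
      (case p of (a, b, e) \<Rightarrow>
        d p * ((if (b, e) = q then 1 else 0)
             - (if (a \<otimes>\<^bsub>G\<^esub> b, e) = q then 1 else 0)
             + (if (a, b \<otimes>\<^bsub>G\<^esub> e) = q then 1 else 0)
             - (if (a, b) = q then 1 else 0))))"

definition cycles2 :: "('a, 'b) monoid_scheme \<Rightarrow> ('a \<times> 'a \<Rightarrow> int) set" where
  "cycles2 G = {c \<in> chains2 G. bd2 G c = (\<lambda>_. 0)}"

definition boundaries2 :: "('a, 'b) monoid_scheme \<Rightarrow> ('a \<times> 'a \<Rightarrow> int) set" where
  "boundaries2 G = bd3 G ` chains3 G"

text \<open>H_2(G) = cycles2 G / boundaries2 G.  Ganea's map H_1(G) \<otimes> Z(G) \<rightarrow> H_2(G)
sends (class of g) \<otimes> z to the class of the cycle [g|z] - [z|g] (the image of the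
homology cross product [g] \<times> [z] under the multiplication G \<times> Z(G) \<rightarrow> G).\<close>

definition ganea_cycle :: "'a \<Rightarrow> 'a \<Rightarrow> ('a \<times> 'a \<Rightarrow> int)" where
  "ganea_cycle g z = (\<lambda>p. (if p = (g, z) then 1 else 0) - (if p = (z, g) then 1 else 0))"

text \<open>Since H_1(G) \<otimes> Z(G) is generated by the elementary tensors, Ganea's map is
onto iff every 2-cycle is homologous to an integral combination of the cycles
ganea_cycle g z with g in G and z central.\<close>

definition ganea_epi :: "('a, 'b) monoid_scheme \<Rightarrow> bool" where
  "ganea_epi G \<longleftrightarrow>
    (\<forall>c \<in> cycles2 G. \<exists>f :: 'a \<times> 'a \<Rightarrow> int. \<exists>b \<in> boundaries2 G.
       c = (\<lambda>q. (\<Sum>p \<in> carrier G \<times> group_center G. f p * ganea_cycle (fst p) (snd p) q) + b q))"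

end

theory Submission
  imports Defs
begin

text \<open>
  Let \<open>W\<close> be the span of the 2-boundaries and of the Ganea cycles \<open>[g|z] - [z|g]\<close> with \<open>z\<close>
  central; the claim is that every 2-cycle lies in \<open>W\<close>. Let \<open>E\<close> be the extension of \<open>G\<close> by
  \<open>C\<^sub>2(G)/W\<close> defined by the tautological cocycle \<open>(g, h) \<mapsto> [g|h]\<close>. As the Ganea cycles vanish
  modulo \<open>W\<close>, lifts of central elements of \<open>G\<close> are central in \<open>E\<close>.

  Let \<open>G\<close> be generated by \<open>a\<close> and \<open>b\<close> with \<open>b a b\<^sup>-\<^sup>1 = a\<^sup>r\<close>. The commutator \<open>d\<close> of the lifts of
  \<open>a\<close> and \<open>b\<close> commutes with the lift of \<open>a\<close> and is conjugated into \<open>\<langle>d\<rangle>\<close> by everything, so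
  \<open>N = \<langle>d\<rangle>\<close> is normal with abelian quotient \<open>E/N\<close>. Moreover \<open>N\<close> meets the kernel trivially: if
  \<open>d\<^sup>k\<close> lies in the kernel, then \<open>a\<^sup>k\<close> commutes with \<open>b\<close>, hence is central, so its lift commutes
  with the lift of \<open>b\<close>, and \<open>d\<^sup>k\<close> is exactly their commutator.

  Finally, sending a 2-chain to its class in \<open>E/N\<close> is additive and maps \<open>[g|h]\<close> to
  \<open>s(g) s(h) s(gh)\<^sup>-\<^sup>1\<close> for the section \<open>s\<close>; as \<open>E/N\<close> is abelian, this map factors through the
  boundary \<open>C\<^sub>2(G) \<rightarrow> C\<^sub>1(G)\<close>. Hence the class in \<open>E\<close> of a cycle lies in \<open>N\<close> and in the kernel, so it
  is trivial, i.e. the cycle lies in \<open>W\<close>.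
\<close>

context group
begin

lemma inv_mult_cancel_left: "x \<in> carrier G \<Longrightarrow> w \<in> carrier G \<Longrightarrow> inv x \<otimes> (x \<otimes> w) = w"
  by (simp add: m_assoc[symmetric])

lemma mult_inv_cancel_left: "x \<in> carrier G \<Longrightarrow> w \<in> carrier G \<Longrightarrow> x \<otimes> (inv x \<otimes> w) = w"
  by (simp add: m_assoc[symmetric])

lemma commutes_mult:
  assumes "x \<in> carrier G" "y \<in> carrier G" "z \<in> carrier G"
    and "x \<otimes> y = y \<otimes> x" "x \<otimes> z = z \<otimes> x"
  shows "x \<otimes> (y \<otimes> z) = (y \<otimes> z) \<otimes> x"
proof -
  have "x \<otimes> (y \<otimes> z) = (x \<otimes> y) \<otimes> z"
    using assms(1-3) by (simp add: m_assoc)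
  also have "\<dots> = y \<otimes> (x \<otimes> z)"
    using assms by (simp add: m_assoc)
  also have "\<dots> = (y \<otimes> z) \<otimes> x"
    using assms by (simp add: m_assoc)
  finally show ?thesis .
qed

lemma commutes_inv:
  "x \<in> carrier G \<Longrightarrow> y \<in> carrier G \<Longrightarrow> x \<otimes> y = y \<otimes> x \<Longrightarrow> x \<otimes> inv y = inv y \<otimes> x"
  by (simp add: inv_solve_right' m_assoc inv_mult_cancel_left)

lemma commutes_pow:
  "x \<in> carrier G \<Longrightarrow> y \<in> carrier G \<Longrightarrow> x \<otimes> y = y \<otimes> x \<Longrightarrow> x \<otimes> y [^] (n::nat) = y [^] n \<otimes> x"
  using group_commutes_pow[of y x n] by simp

lemma conj_nat_pow:
  "x \<in> carrier G \<Longrightarrow> y \<in> carrier G \<Longrightarrow> x \<otimes> y [^] (n::nat) \<otimes> inv x = (x \<otimes> y \<otimes> inv x) [^] n"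
proof (induction n)
  case (Suc n)
  have "(x \<otimes> y [^] n \<otimes> inv x) \<otimes> (x \<otimes> y \<otimes> inv x) = x \<otimes> y [^] n \<otimes> (inv x \<otimes> x) \<otimes> y \<otimes> inv x"
    using Suc.prems by (simp add: m_assoc inv_mult_cancel_left)
  also have "\<dots> = x \<otimes> y [^] Suc n \<otimes> inv x"
    using Suc.prems by (simp add: m_assoc)
  finally show ?case
    using Suc by simp
qed simp

lemma conj_int_pow:
  assumes "x \<in> carrier G" "y \<in> carrier G"
  shows "x \<otimes> y [^] (n::int) \<otimes> inv x = (x \<otimes> y \<otimes> inv x) [^] n"
proof (cases n rule: int_cases)
  case (nonneg m)
  then show ?thesis
    using assms conj_nat_pow[of x y m] by (simp add: int_pow_int)
next
  case (neg m)
  have "x \<otimes> inv (y [^] Suc m) \<otimes> inv x = inv (x \<otimes> y [^] Suc m \<otimes> inv x)"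
    using assms by (simp add: inv_mult_group m_assoc)
  then show ?thesis
    using neg assms conj_nat_pow[of x y "Suc m"]
    by (simp add: int_pow_neg_int inv_mult_cancel_left del: of_nat_Suc)
qed

definition commutator :: "'a \<Rightarrow> 'a \<Rightarrow> 'a" where
  "commutator x y = x \<otimes> y \<otimes> inv x \<otimes> inv y"

lemma commutator_closed [simp]: "x \<in> carrier G \<Longrightarrow> y \<in> carrier G \<Longrightarrow> commutator x y \<in> carrier G"
  unfolding commutator_def by simp

lemma commutator_mult_left:
  "x \<in> carrier G \<Longrightarrow> u \<in> carrier G \<Longrightarrow> y \<in> carrier G \<Longrightarrow>
    commutator (x \<otimes> u) y = x \<otimes> commutator u y \<otimes> inv x \<otimes> commutator x y"
  unfolding commutator_def by (simp add: m_assoc inv_mult_group inv_mult_cancel_left)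

lemma conj_commutator:
  "x \<in> carrier G \<Longrightarrow> y \<in> carrier G \<Longrightarrow> y \<otimes> commutator x y \<otimes> inv y = commutator (y \<otimes> x \<otimes> inv y) y"
  unfolding commutator_def by (simp add: m_assoc inv_mult_group inv_mult_cancel_left)

lemma commutator_eq_one_iff:
  assumes "x \<in> carrier G" "y \<in> carrier G"
  shows "commutator x y = \<one> \<longleftrightarrow> x \<otimes> y = y \<otimes> x"
proof -
  have "commutator x y = (x \<otimes> y) \<otimes> inv (y \<otimes> x)"
    using assms by (simp add: commutator_def inv_mult_group m_assoc)
  then show ?thesis
    using assms by (simp add: inv_solve_right')
qed

lemma commutator_mult_central_left:
  assumes "c \<in> group_center G" "u \<in> carrier G" "y \<in> carrier G"
  shows "commutator (c \<otimes> u) y = commutator u y"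
proof -
  have c: "c \<in> carrier G" "\<And>z. z \<in> carrier G \<Longrightarrow> c \<otimes> z = z \<otimes> c"
    using assms(1) unfolding group_center_def by auto
  then have "commutator c y = \<one>"
    using assms(3) by (simp add: commutator_eq_one_iff)
  then have "commutator (c \<otimes> u) y = c \<otimes> commutator u y \<otimes> inv c"
    using commutator_mult_left[OF c(1) assms(2,3)] c(1) assms by simp
  also have "\<dots> = commutator u y"
    using c assms by (simp add: m_assoc)
  finally show ?thesis .
qed

lemma conj_mult_int_pow:
  assumes "x \<in> carrier G" "y \<in> carrier G" "d \<in> carrier G"
    and "x \<otimes> d \<otimes> inv x = d [^] (e1::int)" "y \<otimes> d \<otimes> inv y = d [^] (e2::int)"
  shows "(x \<otimes> y) \<otimes> d \<otimes> inv (x \<otimes> y) = d [^] (e1 * e2)"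
proof -
  have "(x \<otimes> y) \<otimes> d \<otimes> inv (x \<otimes> y) = x \<otimes> (y \<otimes> d \<otimes> inv y) \<otimes> inv x"
    using assms(1-3) by (simp add: m_assoc inv_mult_group)
  also have "\<dots> = (x \<otimes> d \<otimes> inv x) [^] e2"
    using assms by (simp add: conj_int_pow)
  also have "\<dots> = d [^] (e1 * e2)"
    using assms by (simp add: int_pow_pow)
  finally show ?thesis .
qed

lemma conj_nat_pow_int_pow:
  assumes "x \<in> carrier G" "d \<in> carrier G" "x \<otimes> d \<otimes> inv x = d [^] (e::int)"
  shows "x [^] (n::nat) \<otimes> d \<otimes> inv (x [^] n) = d [^] (e ^ n)"
proof (induction n)
  case (Suc n)
  have "x [^] n \<otimes> x \<otimes> d \<otimes> inv (x [^] n \<otimes> x) = d [^] (e ^ n * e)"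
    using assms Suc by (intro conj_mult_int_pow) simp_all
  then show ?case
    by (simp add: mult.commute)
qed (use assms(2) in simp)

lemma comm_groupI_central_monomials:
  assumes x: "x \<in> carrier G" and y: "y \<in> carrier G" and xy: "x \<otimes> y = y \<otimes> x"
    and monomial: "\<And>g. g \<in> carrier G \<Longrightarrow>
      \<exists>c \<in> group_center G. \<exists>(i::nat) (j::nat). g = c \<otimes> (x [^] i \<otimes> y [^] j)"
  shows "comm_group G"
proof (rule group_comm_groupI)
  have commutes_monomial: "z \<otimes> (x [^] i \<otimes> y [^] j) = (x [^] i \<otimes> y [^] j) \<otimes> z"
    if "z \<in> carrier G" "z \<otimes> x = x \<otimes> z" "z \<otimes> y = y \<otimes> z" for z and i j :: nat
    using that x y by (intro commutes_mult) (simp_all add: commutes_pow)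
  have monomials_commute:
    "(x [^] k \<otimes> y [^] l) \<otimes> (x [^] i \<otimes> y [^] j) = (x [^] i \<otimes> y [^] j) \<otimes> (x [^] k \<otimes> y [^] l)"
    for i j k l :: nat
  proof (rule commutes_monomial)
    show "(x [^] k \<otimes> y [^] l) \<otimes> x = x \<otimes> (x [^] k \<otimes> y [^] l)"
      using commutes_monomial[OF x refl] xy by simp
    show "(x [^] k \<otimes> y [^] l) \<otimes> y = y \<otimes> (x [^] k \<otimes> y [^] l)"
      using commutes_monomial[OF y xy[symmetric] refl] by simp
  qed (use x y in simp)
  fix g h assume "g \<in> carrier G" "h \<in> carrier G"
  then obtain c d and i j k l :: nat where cd: "c \<in> group_center G" "d \<in> group_center G"
    and gh: "g = c \<otimes> (x [^] i \<otimes> y [^] j)" "h = d \<otimes> (x [^] k \<otimes> y [^] l)"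
    using monomial by meson
  then have c: "c \<in> carrier G" "\<forall>z \<in> carrier G. c \<otimes> z = z \<otimes> c"
    and d: "d \<in> carrier G" "\<forall>z \<in> carrier G. d \<otimes> z = z \<otimes> d"
    unfolding group_center_def by auto
  have "(x [^] i \<otimes> y [^] j) \<otimes> h = h \<otimes> (x [^] i \<otimes> y [^] j)"
    unfolding gh(2) using x y d
    by (intro commutes_mult[of "x [^] i \<otimes> y [^] j" d]) (simp_all add: monomials_commute)
  with c show "g \<otimes> h = h \<otimes> g"
    unfolding gh(1) using x y \<open>h \<in> carrier G\<close> by (intro commutes_mult[symmetric]) simp_all
qed

end

locale finite_group = group G for G :: "('a, 'b) monoid_scheme" (structure) +
  assumes finite_carrier: "finite (carrier G)"

locale metacyclic_generators = finite_group +
  fixes a b :: 'a and r :: nat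
  assumes a_closed [simp]: "a \<in> carrier G" and b_closed [simp]: "b \<in> carrier G"
    and conj_b_a: "b \<otimes> a \<otimes> inv b = a [^] r"
    and monomial: "\<And>g. g \<in> carrier G \<Longrightarrow> \<exists>(i::nat) (j::nat). g = a [^] i \<otimes> b [^] j"

context finite_group
begin

lemma int_pow_eq_nat_pow:
  assumes "x \<in> carrier G"
  obtains n :: nat where "x [^] (k::int) = x [^] n"
  using generate_pow[OF assms] generate_pow_on_finite_carrier[OF finite_carrier assms] by blast

lemma cyclic_subgroup_nat_powers:
  assumes "subgroup K G" "cyclic_group (subgroup_generated G K)"
  obtains a where "a \<in> K" "\<And>k. k \<in> K \<Longrightarrow> \<exists>i::nat. k = a [^] i"
proof -
  have carrier_K: "carrier (subgroup_generated G K) = K"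
    by (rule subgroup.carrier_subgroup_generated_subgroup[OF assms(1)])
  have "\<exists>a \<in> carrier (subgroup_generated G K).
      carrier (subgroup_generated G K) = range (\<lambda>n::int. a [^]\<^bsub>subgroup_generated G K\<^esub> n)"
    using assms(2) group.cyclic_group[OF group_subgroup_generated] by blast
  then obtain a where a: "a \<in> K" "K = range (\<lambda>n::int. a [^]\<^bsub>subgroup_generated G K\<^esub> n)"
    unfolding carrier_K by blast
  have "\<exists>i::nat. k = a [^] i" if "k \<in> K" for k
  proof -
    have "k \<in> range (\<lambda>n::int. a [^]\<^bsub>subgroup_generated G K\<^esub> n)"
      using that a(2) by simp
    then obtain n :: int where "k = a [^]\<^bsub>subgroup_generated G K\<^esub> n"
      by (rule rangeE)
    then have "k = a [^] n"
      using int_pow_subgroup_generated[of a K] a(1) carrier_K by simp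
    moreover obtain i :: nat where "a [^] n = a [^] i"
      using int_pow_eq_nat_pow a(1) subgroup.mem_carrier[OF assms(1)] by blast
    ultimately show ?thesis
      by blast
  qed
  with a(1) show ?thesis
    using that by blast
qed

lemma cyclic_quotient_nat_powers:
  assumes "K \<lhd> G" "cyclic_group (G Mod K)"
  obtains b where "b \<in> carrier G" "\<And>g. g \<in> carrier G \<Longrightarrow> \<exists>k \<in> K. \<exists>j::nat. g = k \<otimes> b [^] j"
proof -
  interpret K: normal K G
    by (rule assms(1))
  interpret Q: group "G Mod K"
    by (rule K.factorgroup_is_group)
  obtain B where B: "B \<in> carrier (G Mod K)" "carrier (G Mod K) = range (\<lambda>n::int. B [^]\<^bsub>G Mod K\<^esub> n)"
    using assms(2) Q.cyclic_group by blast
  obtain b where b: "b \<in> carrier G" "B = K #> b"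
    using B(1) unfolding carrier_FactGroup by auto
  have "\<exists>k \<in> K. \<exists>j::nat. g = k \<otimes> b [^] j" if g: "g \<in> carrier G" for g
  proof -
    have "K #> g \<in> carrier (G Mod K)"
      using g unfolding carrier_FactGroup by auto
    then obtain n :: int where "K #> g = B [^]\<^bsub>G Mod K\<^esub> n"
      using B(2) by auto
    also have "\<dots> = K #> (b [^] n)"
      using hom_int_pow[OF K.r_coset_hom_Mod b(1) is_group Q.is_group] b(2) by simp
    finally have "g \<in> K #> (b [^] n)"
      using rcos_self[OF g K.subgroup_axioms] by simp
    then obtain k where "k \<in> K" "g = k \<otimes> b [^] n"
      unfolding r_coset_def by auto
    moreover obtain j :: nat where "b [^] n = b [^] j"
      using int_pow_eq_nat_pow[OF b(1)] .
    ultimately show ?thesis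
      by auto
  qed
  with b(1) show ?thesis
    using that by blast
qed

lemma obtain_metacyclic_generators:
  assumes "metacyclic G"
  obtains a b and r :: nat where "metacyclic_generators G a b r"
proof -
  obtain K where K: "K \<lhd> G" "cyclic_group (subgroup_generated G K)" "cyclic_group (G Mod K)"
    using assms unfolding metacyclic_def by blast
  interpret K: normal K G
    by (rule K(1))
  obtain a where a: "a \<in> K" "\<And>k. k \<in> K \<Longrightarrow> \<exists>i::nat. k = a [^] i"
    using cyclic_subgroup_nat_powers[OF K.subgroup_axioms K(2)] by blast
  obtain b where b: "b \<in> carrier G" "\<And>g. g \<in> carrier G \<Longrightarrow> \<exists>k \<in> K. \<exists>j::nat. g = k \<otimes> b [^] j"
    using cyclic_quotient_nat_powers[OF K(1,3)] by blast
  have monomial: "\<exists>(i::nat) (j::nat). g = a [^] i \<otimes> b [^] j" if "g \<in> carrier G" for g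
    using a(2) b(2)[OF that] by blast
  obtain r :: nat where "b \<otimes> a \<otimes> inv b = a [^] r"
    using a K.inv_op_closed2[OF b(1) a(1)] by blast
  with a(1) b(1) monomial show ?thesis
    by (intro that metacyclic_generators.intro finite_group_axioms metacyclic_generators_axioms.intro)
      auto
qed

end

section \<open>Chains modulo the Ganea span\<close>

definition basis_chain :: "'x \<Rightarrow> 'x \<Rightarrow> int" where
  "basis_chain p = (\<lambda>q. if q = p then 1 else 0)"

lemma sum_basis_chain_mult:
  assumes "finite A" "p \<in> A"
  shows "(\<Sum>q\<in>A. basis_chain p q * f q) = f p"
proof -
  have "(\<Sum>q\<in>A. basis_chain p q * f q) = (\<Sum>q\<in>A. if q = p then f q else 0)"
    by (rule sum.cong) (simp_all add: basis_chain_def)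
  then show ?thesis
    using assms by simp
qed

lemma bd2_add: "bd2 G (\<lambda>p. c1 p + c2 p) = (\<lambda>x. bd2 G c1 x + bd2 G c2 x)"
  unfolding bd2_def by (simp add: distrib_right sum.distrib)

lemma bd2_basis_chain:
  assumes "finite (carrier G)" "g \<in> carrier G" "h \<in> carrier G"
  shows "bd2 G (basis_chain (g, h))
    = (\<lambda>x. basis_chain h x - basis_chain (g \<otimes>\<^bsub>G\<^esub> h) x + basis_chain g x)"
  unfolding bd2_def using assms
  by (subst sum_basis_chain_mult) (auto simp: basis_chain_def)

lemma bd3_add: "bd3 G (\<lambda>p. d1 p + d2 p) = (\<lambda>q. bd3 G d1 q + bd3 G d2 q)"
  unfolding bd3_def by (simp add: split_def distrib_right sum.distrib)

lemma bd3_uminus: "bd3 G (\<lambda>p. - d p) = (\<lambda>q. - bd3 G d q)"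
  unfolding bd3_def by (simp add: split_def sum_negf)

lemma bd3_basis_chain:
  assumes "finite (carrier G)" "x \<in> carrier G" "y \<in> carrier G" "z \<in> carrier G"
  shows "bd3 G (basis_chain (x, y, z))
    = (\<lambda>q. basis_chain (y, z) q - basis_chain (x \<otimes>\<^bsub>G\<^esub> y, z) q
           + basis_chain (x, y \<otimes>\<^bsub>G\<^esub> z) q - basis_chain (x, y) q)"
  unfolding bd3_def split_def using assms
  by (subst sum_basis_chain_mult) (auto simp: basis_chain_def intro!: ext)

lemma chains3_add:
  "d1 \<in> chains3 G \<Longrightarrow> d2 \<in> chains3 G \<Longrightarrow> (\<lambda>p. d1 p + d2 p) \<in> chains3 G"
  unfolding chains3_def by (simp, metis add.right_neutral add_0)

lemma boundaries2_add:
  assumes "b1 \<in> boundaries2 G" "b2 \<in> boundaries2 G"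
  shows "(\<lambda>q. b1 q + b2 q) \<in> boundaries2 G"
proof -
  obtain d1 d2 where d: "d1 \<in> chains3 G" "d2 \<in> chains3 G" "b1 = bd3 G d1" "b2 = bd3 G d2"
    using assms unfolding boundaries2_def by blast
  then have "(\<lambda>q. b1 q + b2 q) = bd3 G (\<lambda>p. d1 p + d2 p)"
    by (simp add: bd3_add)
  with chains3_add[OF d(1,2)] show ?thesis
    unfolding boundaries2_def by blast
qed

lemma boundaries2_uminus:
  assumes "b \<in> boundaries2 G"
  shows "(\<lambda>q. - b q) \<in> boundaries2 G"
proof -
  obtain d where d: "d \<in> chains3 G" "b = bd3 G d"
    using assms unfolding boundaries2_def by blast
  then have "(\<lambda>q. - b q) = bd3 G (\<lambda>p. - d p)"
    by (simp add: bd3_uminus)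
  moreover have "(\<lambda>p. - d p) \<in> chains3 G"
    using d(1) unfolding chains3_def by simp
  ultimately show ?thesis
    unfolding boundaries2_def by blast
qed

lemma zero_in_boundaries2: "(\<lambda>q. 0) \<in> boundaries2 G"
proof -
  have "(\<lambda>p. 0) \<in> chains3 G"
    unfolding chains3_def by simp
  moreover have "(\<lambda>q. 0) = bd3 G (\<lambda>p. 0)"
    unfolding bd3_def by (simp add: split_def)
  ultimately show ?thesis
    unfolding boundaries2_def by blast
qed

lemma basis_chain3_in_chains3:
  "x \<in> carrier G \<Longrightarrow> y \<in> carrier G \<Longrightarrow> z \<in> carrier G \<Longrightarrow> basis_chain (x, y, z) \<in> chains3 G"
  unfolding chains3_def basis_chain_def by auto

context group
begin

lemma additive_map_int_scale:
  assumes add: "\<And>u v. F (\<lambda>q. u q + v q) = F u \<otimes> F v" and closed: "\<And>u. F u \<in> carrier G"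
  shows "F (\<lambda>q. k * u q) = F u [^] (k::int)"
proof -
  have zero: "F (\<lambda>q. 0) = \<one>"
    using add[of "\<lambda>q. 0" "\<lambda>q. 0"] closed by (metis add_0 l_one one_closed r_cancel)
  have nat_scale: "F (\<lambda>q. int n * u q) = F u [^] n" for n :: nat
  proof (induction n)
    case (Suc n)
    have "F (\<lambda>q. int (Suc n) * u q) = F (\<lambda>q. int n * u q + u q)"
      by (simp add: algebra_simps)
    with Suc add show ?case
      by simp
  qed (simp add: zero)
  show ?thesis
  proof (cases k rule: int_cases)
    case (nonneg n)
    then show ?thesis
      using nat_scale[of n] by (simp add: int_pow_int)
  next
    case (neg n)
    have "F (\<lambda>q. k * u q) \<otimes> F (\<lambda>q. int (Suc n) * u q) = \<one>"
      using add[of "\<lambda>q. k * u q" "\<lambda>q. int (Suc n) * u q"] neg zero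
      by (simp add: algebra_simps del: of_nat_Suc)
    then have "F (\<lambda>q. k * u q) = inv (F (\<lambda>q. int (Suc n) * u q))"
      using closed by (metis inv_equality)
    then show ?thesis
      using nat_scale[of "Suc n"] neg closed
      by (simp add: int_pow_neg_int del: of_nat_Suc nat_pow_Suc)
  qed
qed

lemma additive_maps_eq_on_supported:
  assumes add: "\<And>u v. F (\<lambda>q. u q + v q) = F u \<otimes> F v" "\<And>u v. F' (\<lambda>q. u q + v q) = F' u \<otimes> F' v"
    and closed: "\<And>u. F u \<in> carrier G" "\<And>u. F' u \<in> carrier G"
    and basis: "\<And>p. p \<in> S \<Longrightarrow> F (basis_chain p) = F' (basis_chain p)"
    and "finite S" and support: "\<And>q. w q \<noteq> 0 \<Longrightarrow> q \<in> S"
  shows "F w = F' w"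
  using \<open>finite S\<close> basis support
proof (induction S arbitrary: w rule: finite_induct)
  case empty
  then have "w = (\<lambda>q. 0 * w q)"
    by auto
  then show ?case
    using additive_map_int_scale[of F, OF add(1) closed(1)]
      additive_map_int_scale[of F', OF add(2) closed(2)] by (metis int_pow_0)
next
  case (insert p S)
  define w' where "w' = w(p := 0)"
  have w: "w = (\<lambda>q. w' q + w p * basis_chain p q)"
    unfolding w'_def basis_chain_def by auto
  have "F w' = F' w'"
  proof (rule insert.IH)
    show "\<And>p. p \<in> S \<Longrightarrow> F (basis_chain p) = F' (basis_chain p)"
      using insert.prems(1) by blast
    show "\<And>q. w' q \<noteq> 0 \<Longrightarrow> q \<in> S"
      using insert.prems(2) unfolding w'_def by (metis fun_upd_apply insert_iff)
  qed
  moreover have "F (basis_chain p) = F' (basis_chain p)"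
    using insert by simp
  ultimately show ?case
    using additive_map_int_scale[of F, OF add(1) closed(1)]
      additive_map_int_scale[of F', OF add(2) closed(2)]
    by (subst (1 2) w) (simp add: add)
qed

end

definition ganea_span :: "('a, 'b) monoid_scheme \<Rightarrow> ('a \<times> 'a \<Rightarrow> int) set" where
  "ganea_span G = {c. \<exists>f. \<exists>b \<in> boundaries2 G.
       c = (\<lambda>q. (\<Sum>p \<in> carrier G \<times> group_center G. f p * ganea_cycle (fst p) (snd p) q) + b q)}"

lemma ganea_epi_iff_cycles2_subset: "ganea_epi G \<longleftrightarrow> cycles2 G \<subseteq> ganea_span G"
  unfolding ganea_epi_def ganea_span_def by blast

lemma boundaries2_subset_ganea_span: "boundaries2 G \<subseteq> ganea_span G"
proof
  fix b assume "b \<in> boundaries2 G"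
  then show "b \<in> ganea_span G"
    unfolding ganea_span_def by (intro CollectI exI[of _ "\<lambda>p. 0"] bexI[of _ b]) simp_all
qed

lemma zero_in_ganea_span: "(\<lambda>q. 0) \<in> ganea_span G"
  using boundaries2_subset_ganea_span zero_in_boundaries2 by blast

lemma ganea_span_add:
  assumes "u \<in> ganea_span G" "v \<in> ganea_span G"
  shows "(\<lambda>q. u q + v q) \<in> ganea_span G"
proof -
  obtain f1 b1 f2 b2 where b: "b1 \<in> boundaries2 G" "b2 \<in> boundaries2 G" and
    "u = (\<lambda>q. (\<Sum>p \<in> carrier G \<times> group_center G. f1 p * ganea_cycle (fst p) (snd p) q) + b1 q)"
    "v = (\<lambda>q. (\<Sum>p \<in> carrier G \<times> group_center G. f2 p * ganea_cycle (fst p) (snd p) q) + b2 q)"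
    using assms unfolding ganea_span_def by blast
  then have "(\<lambda>q. u q + v q) = (\<lambda>q. (\<Sum>p \<in> carrier G \<times> group_center G.
      (f1 p + f2 p) * ganea_cycle (fst p) (snd p) q) + (b1 q + b2 q))"
    by (simp add: distrib_right sum.distrib add_ac)
  with boundaries2_add[OF b] show ?thesis
    unfolding ganea_span_def by (intro CollectI exI[of _ "\<lambda>p. f1 p + f2 p"] bexI)
qed

lemma ganea_span_uminus:
  assumes "u \<in> ganea_span G"
  shows "(\<lambda>q. - u q) \<in> ganea_span G"
proof -
  obtain f b where b: "b \<in> boundaries2 G" and
    "u = (\<lambda>q. (\<Sum>p \<in> carrier G \<times> group_center G. f p * ganea_cycle (fst p) (snd p) q) + b q)"
    using assms unfolding ganea_span_def by blast
  then have "(\<lambda>q. - u q) = (\<lambda>q. (\<Sum>p \<in> carrier G \<times> group_center G.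
      (- f p) * ganea_cycle (fst p) (snd p) q) + (- b q))"
    by (simp add: sum_negf)
  with boundaries2_uminus[OF b] show ?thesis
    unfolding ganea_span_def by (intro CollectI exI[of _ "\<lambda>p. - f p"] bexI)
qed

lemma ganea_span_diff:
  "u \<in> ganea_span G \<Longrightarrow> v \<in> ganea_span G \<Longrightarrow> (\<lambda>q. u q - v q) \<in> ganea_span G"
  using ganea_span_add[of u G "\<lambda>q. - v q"] ganea_span_uminus[of v G] by simp

lemma ganea_cycle_in_ganea_span:
  assumes "finite (carrier G)" "g \<in> carrier G" "z \<in> group_center G"
  shows "ganea_cycle g z \<in> ganea_span G"
proof -
  have "group_center G \<subseteq> carrier G"
    unfolding group_center_def by blast
  then have "finite (carrier G \<times> group_center G)"
    using assms(1) finite_subset by blast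
  then have "ganea_cycle g z = (\<lambda>q. (\<Sum>p \<in> carrier G \<times> group_center G.
      basis_chain (g, z) p * ganea_cycle (fst p) (snd p) q) + 0)"
    using assms(2,3) by (simp add: sum_basis_chain_mult)
  then show ?thesis
    unfolding ganea_span_def
    by (intro CollectI exI[of _ "basis_chain (g, z)"] bexI[OF _ zero_in_boundaries2])
qed

lemma basis_coboundary_in_ganea_span:
  assumes "finite (carrier G)" "x \<in> carrier G" "y \<in> carrier G" "z \<in> carrier G"
  shows "(\<lambda>q. basis_chain (y, z) q - basis_chain (x \<otimes>\<^bsub>G\<^esub> y, z) q
           + basis_chain (x, y \<otimes>\<^bsub>G\<^esub> z) q - basis_chain (x, y) q) \<in> ganea_span G"
  using boundaries2_subset_ganea_span basis_chain3_in_chains3[OF assms(2-4)]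
  unfolding bd3_basis_chain[OF assms, symmetric] boundaries2_def by blast


definition chain_class :: "('a, 'b) monoid_scheme \<Rightarrow> ('a \<times> 'a \<Rightarrow> int) \<Rightarrow> ('a \<times> 'a \<Rightarrow> int) set"
  where "chain_class G u = {v. (\<lambda>q. v q - u q) \<in> ganea_span G}"

definition class_rep :: "('x \<Rightarrow> int) set \<Rightarrow> 'x \<Rightarrow> int" where
  "class_rep S = (SOME w. w \<in> S)"

lemma mem_chain_class_self: "u \<in> chain_class G u"
  unfolding chain_class_def using zero_in_ganea_span by simp

lemma chain_class_eq_iff:
  "chain_class G u = chain_class G v \<longleftrightarrow> (\<lambda>q. u q - v q) \<in> ganea_span G"
proof
  assume "chain_class G u = chain_class G v"
  then show "(\<lambda>q. u q - v q) \<in> ganea_span G"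
    using mem_chain_class_self[of u G] unfolding chain_class_def by simp
next
  assume uv: "(\<lambda>q. u q - v q) \<in> ganea_span G"
  have "(\<lambda>q. w q - u q) \<in> ganea_span G \<longleftrightarrow> (\<lambda>q. w q - v q) \<in> ganea_span G" for w
    using ganea_span_add[OF _ uv, of "\<lambda>q. w q - u q"] ganea_span_diff[OF _ uv, of "\<lambda>q. w q - v q"]
    by auto
  then show "chain_class G u = chain_class G v"
    unfolding chain_class_def by blast
qed

lemma chain_class_eqI:
  "c \<in> ganea_span G \<Longrightarrow> (\<And>q. u q - v q = c q) \<Longrightarrow> chain_class G u = chain_class G v"
  unfolding chain_class_eq_iff by simp

lemma chain_class_class_rep: "chain_class G (class_rep (chain_class G u)) = chain_class G u"
proof -
  have "class_rep (chain_class G u) \<in> chain_class G u"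
    using mem_chain_class_self[of u G] unfolding class_rep_def
    by (rule someI[where P = "\<lambda>w. w \<in> chain_class G u"])
  then show ?thesis
    unfolding chain_class_eq_iff by (simp add: chain_class_def)
qed

section \<open>The extension by the tautological cocycle\<close>

definition cocycle_ext :: "('a, 'b) monoid_scheme \<Rightarrow> (('a \<times> 'a \<Rightarrow> int) set \<times> 'a) monoid" where
  "cocycle_ext G = \<lparr>carrier = {(chain_class G u, g) | u g. g \<in> carrier G},
     monoid.mult = (\<lambda>x y. (chain_class G (\<lambda>q. class_rep (fst x) q + class_rep (fst y) q
                                        + basis_chain (snd x, snd y) q),
                    snd x \<otimes>\<^bsub>G\<^esub> snd y)),
     one = (chain_class G (\<lambda>q. - basis_chain (\<one>\<^bsub>G\<^esub>, \<one>\<^bsub>G\<^esub>) q), \<one>\<^bsub>G\<^esub>)\<rparr>"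

lemma cocycle_ext_carrier_iff: "(chain_class G u, g) \<in> carrier (cocycle_ext G) \<longleftrightarrow> g \<in> carrier G"
  unfolding cocycle_ext_def by auto

lemma cocycle_ext_carrierE:
  assumes "x \<in> carrier (cocycle_ext G)"
  obtains u g where "x = (chain_class G u, g)" "g \<in> carrier G"
  using assms unfolding cocycle_ext_def by auto

lemma cocycle_ext_mult:
  "(chain_class G u, g) \<otimes>\<^bsub>cocycle_ext G\<^esub> (chain_class G v, h)
     = (chain_class G (\<lambda>q. u q + v q + basis_chain (g, h) q), g \<otimes>\<^bsub>G\<^esub> h)"
proof -
  have "chain_class G (\<lambda>q. class_rep (chain_class G u) q + class_rep (chain_class G v) q
          + basis_chain (g, h) q)
      = chain_class G (\<lambda>q. u q + v q + basis_chain (g, h) q)"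
    using ganea_span_add[of "\<lambda>q. class_rep (chain_class G u) q - u q" G
        "\<lambda>q. class_rep (chain_class G v) q - v q"]
      chain_class_class_rep[of G u] chain_class_class_rep[of G v]
    unfolding chain_class_eq_iff by (simp add: algebra_simps)
  then show ?thesis
    unfolding cocycle_ext_def by simp
qed

lemma cocycle_ext_one:
  "\<one>\<^bsub>cocycle_ext G\<^esub> = (chain_class G (\<lambda>q. - basis_chain (\<one>\<^bsub>G\<^esub>, \<one>\<^bsub>G\<^esub>) q), \<one>\<^bsub>G\<^esub>)"
  unfolding cocycle_ext_def by simp

context finite_group
begin

abbreviation E where "E \<equiv> cocycle_ext G"

lemma cocycle_ext_assoc:
  assumes "g \<in> carrier G" "h \<in> carrier G" "k \<in> carrier G"
  shows "(chain_class G u, g) \<otimes>\<^bsub>E\<^esub> (chain_class G v, h) \<otimes>\<^bsub>E\<^esub> (chain_class G w, k)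
    = (chain_class G u, g) \<otimes>\<^bsub>E\<^esub> ((chain_class G v, h) \<otimes>\<^bsub>E\<^esub> (chain_class G w, k))"
proof -
  have "chain_class G (\<lambda>q. u q + v q + basis_chain (g, h) q + w q + basis_chain (g \<otimes> h, k) q)
    = chain_class G (\<lambda>q. u q + (v q + w q + basis_chain (h, k) q) + basis_chain (g, h \<otimes> k) q)"
    using assms
    by (intro chain_class_eqI[OF ganea_span_uminus[OF
          basis_coboundary_in_ganea_span[OF finite_carrier, of g h k]]]) simp_all
  with assms show ?thesis
    by (simp add: cocycle_ext_mult m_assoc)
qed

lemma cocycle_ext_l_one: "g \<in> carrier G \<Longrightarrow> \<one>\<^bsub>E\<^esub> \<otimes>\<^bsub>E\<^esub> (chain_class G u, g) = (chain_class G u, g)"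
  using chain_class_eqI[OF basis_coboundary_in_ganea_span[OF finite_carrier, of \<one> \<one> g],
      of "\<lambda>q. - basis_chain (\<one>, \<one>) q + u q + basis_chain (\<one>, g) q" u]
  by (simp add: cocycle_ext_one cocycle_ext_mult)

lemma cocycle_ext_l_inv:
  "(chain_class G (\<lambda>q. - u q - basis_chain (inv g, g) q - basis_chain (\<one>, \<one>) q), inv g)
     \<otimes>\<^bsub>E\<^esub> (chain_class G u, g) = \<one>\<^bsub>E\<^esub>"
  if "g \<in> carrier G"
  using that by (simp add: cocycle_ext_mult cocycle_ext_one)

lemma group_cocycle_ext: "group E"
proof (rule groupI)
  fix x y z assume x: "x \<in> carrier E" and y: "y \<in> carrier E" and z: "z \<in> carrier E"
  show "x \<otimes>\<^bsub>E\<^esub> y \<in> carrier E"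
    using x y by (elim cocycle_ext_carrierE) (simp add: cocycle_ext_mult cocycle_ext_carrier_iff)
  show "x \<otimes>\<^bsub>E\<^esub> y \<otimes>\<^bsub>E\<^esub> z = x \<otimes>\<^bsub>E\<^esub> (y \<otimes>\<^bsub>E\<^esub> z)"
    using x y z by (elim cocycle_ext_carrierE) (simp add: cocycle_ext_assoc)
  show "\<one>\<^bsub>E\<^esub> \<otimes>\<^bsub>E\<^esub> x = x"
    using x by (elim cocycle_ext_carrierE) (simp add: cocycle_ext_l_one)
  show "\<exists>y \<in> carrier E. y \<otimes>\<^bsub>E\<^esub> x = \<one>\<^bsub>E\<^esub>"
    using x by (elim cocycle_ext_carrierE) (auto simp: cocycle_ext_carrier_iff dest: cocycle_ext_l_inv)
qed (simp add: cocycle_ext_one cocycle_ext_carrier_iff)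

sublocale E: group E
  by (rule group_cocycle_ext)

lemma snd_ext_closed: "x \<in> carrier E \<Longrightarrow> snd x \<in> carrier G"
  by (elim cocycle_ext_carrierE) simp

lemma snd_ext_mult: "x \<in> carrier E \<Longrightarrow> y \<in> carrier E \<Longrightarrow> snd (x \<otimes>\<^bsub>E\<^esub> y) = snd x \<otimes> snd y"
  by (elim cocycle_ext_carrierE) (simp add: cocycle_ext_mult)

lemma snd_hom_ext: "snd \<in> hom E G"
  by (rule homI) (simp_all add: snd_ext_closed snd_ext_mult)

lemma snd_ext_inv: "x \<in> carrier E \<Longrightarrow> snd (inv\<^bsub>E\<^esub> x) = inv (snd x)"
  using group_hom.hom_inv[of E G snd] snd_hom_ext is_group E.is_group
  by (simp add: group_hom_def group_hom_axioms_def)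

lemma snd_ext_pow: "x \<in> carrier E \<Longrightarrow> snd (x [^]\<^bsub>E\<^esub> (n::nat)) = snd x [^] n"
  using hom_nat_pow[OF snd_hom_ext _ E.is_group is_group] by blast

definition lift :: "'a \<Rightarrow> ('a \<times> 'a \<Rightarrow> int) set \<times> 'a" where
  "lift g = (chain_class G (\<lambda>q. 0), g)"

lemma lift_closed [simp]: "g \<in> carrier G \<Longrightarrow> lift g \<in> carrier E"
  unfolding lift_def by (simp add: cocycle_ext_carrier_iff)

lemma snd_lift [simp]: "snd (lift g) = g"
  unfolding lift_def by simp

definition ext_kernel :: "(('a \<times> 'a \<Rightarrow> int) set \<times> 'a) set" where
  "ext_kernel = {x \<in> carrier E. snd x = \<one>}"

lemma ext_kernel_subset: "ext_kernel \<subseteq> carrier E"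
  unfolding ext_kernel_def by blast

lemma mult_inv_in_ext_kernel:
  "x \<in> carrier E \<Longrightarrow> y \<in> carrier E \<Longrightarrow> snd x = snd y \<Longrightarrow> x \<otimes>\<^bsub>E\<^esub> inv\<^bsub>E\<^esub> y \<in> ext_kernel"
  unfolding ext_kernel_def by (simp add: snd_ext_mult snd_ext_inv snd_ext_closed)

lemma central_lift_commutes:
  assumes x: "x \<in> carrier E" and y: "y \<in> carrier E" and central: "snd x \<in> group_center G"
  shows "x \<otimes>\<^bsub>E\<^esub> y = y \<otimes>\<^bsub>E\<^esub> x"
proof -
  obtain u z v g where xy: "x = (chain_class G u, z)" "y = (chain_class G v, g)" "g \<in> carrier G"
    using x y by (metis cocycle_ext_carrierE)
  then have z: "z \<in> group_center G"
    using central by simp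
  then have "z \<otimes> g = g \<otimes> z"
    using xy(3) unfolding group_center_def by blast
  moreover have "chain_class G (\<lambda>q. u q + v q + basis_chain (z, g) q)
      = chain_class G (\<lambda>q. v q + u q + basis_chain (g, z) q)"
    by (rule chain_class_eqI[OF ganea_span_uminus[OF ganea_cycle_in_ganea_span[OF finite_carrier xy(3) z]]])
      (simp add: ganea_cycle_def basis_chain_def)
  ultimately show ?thesis
    unfolding xy by (simp add: cocycle_ext_mult)
qed

lemma ext_kernel_central: "x \<in> ext_kernel \<Longrightarrow> y \<in> carrier E \<Longrightarrow> x \<otimes>\<^bsub>E\<^esub> y = y \<otimes>\<^bsub>E\<^esub> x"
  by (rule central_lift_commutes) (auto simp: ext_kernel_def group_center_def)

text \<open>The identity of \<open>E\<close> is the class of \<open>-[1|1]\<close>, whence the shift.\<close>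

definition kernel_elem :: "('a \<times> 'a \<Rightarrow> int) \<Rightarrow> ('a \<times> 'a \<Rightarrow> int) set \<times> 'a" where
  "kernel_elem w = (chain_class G (\<lambda>q. w q - basis_chain (\<one>, \<one>) q), \<one>)"

lemma kernel_elem_in_ext_kernel: "kernel_elem w \<in> ext_kernel"
  unfolding kernel_elem_def ext_kernel_def by (simp add: cocycle_ext_carrier_iff)

lemma kernel_elem_closed [simp]: "kernel_elem w \<in> carrier E"
  unfolding kernel_elem_def by (simp add: cocycle_ext_carrier_iff)

lemma kernel_elem_add:
  "kernel_elem (\<lambda>q. w1 q + w2 q) = kernel_elem w1 \<otimes>\<^bsub>E\<^esub> kernel_elem w2"
  unfolding kernel_elem_def cocycle_ext_mult by (simp add: algebra_simps)

lemma kernel_elem_eq_one_iff: "kernel_elem w = \<one>\<^bsub>E\<^esub> \<longleftrightarrow> w \<in> ganea_span G"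
  unfolding kernel_elem_def cocycle_ext_one by (simp add: chain_class_eq_iff)

lemma kernel_elem_basis_chain:
  assumes "g \<in> carrier G" "h \<in> carrier G"
  shows "kernel_elem (basis_chain (g, h)) \<otimes>\<^bsub>E\<^esub> lift (g \<otimes> h) = lift g \<otimes>\<^bsub>E\<^esub> lift h"
proof -
  have "chain_class G (\<lambda>q. basis_chain (g, h) q - basis_chain (\<one>, \<one>) q + 0
      + basis_chain (\<one>, g \<otimes> h) q) = chain_class G (\<lambda>q. 0 + 0 + basis_chain (g, h) q)"
    using assms by (intro chain_class_eqI[OF basis_coboundary_in_ganea_span[OF finite_carrier, of \<one> \<one> "g \<otimes> h"]]) simp_all
  then show ?thesis
    unfolding kernel_elem_def lift_def cocycle_ext_mult using assms by simp
qed

end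

section \<open>The metacyclic case\<close>

context metacyclic_generators
begin

lemma ext_monomial:
  assumes "x \<in> carrier E"
  shows "\<exists>\<beta> \<in> ext_kernel. \<exists>(i::nat) (j::nat).
    x = \<beta> \<otimes>\<^bsub>E\<^esub> (lift a [^]\<^bsub>E\<^esub> i \<otimes>\<^bsub>E\<^esub> lift b [^]\<^bsub>E\<^esub> j)"
proof -
  obtain i j :: nat where ij: "snd x = a [^] i \<otimes> b [^] j"
    using monomial[OF snd_ext_closed[OF assms]] by blast
  define m where "m = lift a [^]\<^bsub>E\<^esub> i \<otimes>\<^bsub>E\<^esub> lift b [^]\<^bsub>E\<^esub> j"
  have m: "m \<in> carrier E" "snd x = snd m"
    unfolding m_def ij by (simp_all add: snd_ext_mult snd_ext_pow)
  have "x = (x \<otimes>\<^bsub>E\<^esub> inv\<^bsub>E\<^esub> m) \<otimes>\<^bsub>E\<^esub> m"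
    using assms m(1) by (simp add: E.m_assoc)
  with mult_inv_in_ext_kernel[OF assms m] show ?thesis
    unfolding m_def by blast
qed

lemma conj_lift_a:
  "\<exists>\<alpha> \<in> ext_kernel. lift b \<otimes>\<^bsub>E\<^esub> lift a \<otimes>\<^bsub>E\<^esub> inv\<^bsub>E\<^esub> lift b = \<alpha> \<otimes>\<^bsub>E\<^esub> lift a [^]\<^bsub>E\<^esub> r"
proof -
  let ?c = "lift b \<otimes>\<^bsub>E\<^esub> lift a \<otimes>\<^bsub>E\<^esub> inv\<^bsub>E\<^esub> lift b"
  have "?c \<otimes>\<^bsub>E\<^esub> inv\<^bsub>E\<^esub> (lift a [^]\<^bsub>E\<^esub> r) \<in> ext_kernel"
    by (rule mult_inv_in_ext_kernel) (simp_all add: snd_ext_mult snd_ext_inv snd_ext_pow conj_b_a)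
  moreover have "?c = (?c \<otimes>\<^bsub>E\<^esub> inv\<^bsub>E\<^esub> (lift a [^]\<^bsub>E\<^esub> r)) \<otimes>\<^bsub>E\<^esub> lift a [^]\<^bsub>E\<^esub> r"
    by (simp add: E.m_assoc)
  ultimately show ?thesis
    by blast
qed

definition lift_commutator :: "('a \<times> 'a \<Rightarrow> int) set \<times> 'a" where
  "lift_commutator = E.commutator (lift a) (lift b)"

lemma lift_commutator_closed [simp]: "lift_commutator \<in> carrier E"
  unfolding lift_commutator_def by simp

lemma lift_a_commutes_lift_commutator:
  "lift a \<otimes>\<^bsub>E\<^esub> lift_commutator = lift_commutator \<otimes>\<^bsub>E\<^esub> lift a"
proof -
  obtain \<alpha> where \<alpha>: "\<alpha> \<in> ext_kernel"
    "lift b \<otimes>\<^bsub>E\<^esub> lift a \<otimes>\<^bsub>E\<^esub> inv\<^bsub>E\<^esub> lift b = \<alpha> \<otimes>\<^bsub>E\<^esub> lift a [^]\<^bsub>E\<^esub> r"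
    using conj_lift_a by blast
  let ?w = "\<alpha> \<otimes>\<^bsub>E\<^esub> lift a [^]\<^bsub>E\<^esub> r"
  have \<alpha>_closed: "\<alpha> \<in> carrier E"
    using \<alpha>(1) ext_kernel_subset by blast
  have lc: "lift_commutator = lift a \<otimes>\<^bsub>E\<^esub> inv\<^bsub>E\<^esub> ?w"
    unfolding lift_commutator_def E.commutator_def \<alpha>(2)[symmetric]
    by (simp add: E.inv_mult_group E.m_assoc)
  have "lift a \<otimes>\<^bsub>E\<^esub> ?w = ?w \<otimes>\<^bsub>E\<^esub> lift a"
    using \<alpha>_closed ext_kernel_central[OF \<alpha>(1), of "lift a"]
    by (intro E.commutes_mult) (simp_all add: E.commutes_pow)
  then have "lift a \<otimes>\<^bsub>E\<^esub> inv\<^bsub>E\<^esub> ?w = inv\<^bsub>E\<^esub> ?w \<otimes>\<^bsub>E\<^esub> lift a"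
    using \<alpha>_closed by (intro E.commutes_inv) simp_all
  then show ?thesis
    unfolding lc using \<alpha>_closed by (intro E.commutes_mult) simp_all
qed

lemma commutator_lift_a_pow:
  "E.commutator (lift a [^]\<^bsub>E\<^esub> (k::nat)) (lift b) = lift_commutator [^]\<^bsub>E\<^esub> k"
proof (induction k)
  case 0
  then show ?case
    by (simp add: E.commutator_def)
next
  case (Suc k)
  have "E.commutator (lift a [^]\<^bsub>E\<^esub> Suc k) (lift b)
      = E.commutator (lift a \<otimes>\<^bsub>E\<^esub> lift a [^]\<^bsub>E\<^esub> k) (lift b)"
    by (subst E.nat_pow_Suc2) simp_all
  also have "\<dots> = lift a \<otimes>\<^bsub>E\<^esub> lift_commutator [^]\<^bsub>E\<^esub> k \<otimes>\<^bsub>E\<^esub> inv\<^bsub>E\<^esub> lift a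
      \<otimes>\<^bsub>E\<^esub> lift_commutator"
    using E.commutator_mult_left[of "lift a" "lift a [^]\<^bsub>E\<^esub> k" "lift b"] Suc
    by (simp add: lift_commutator_def)
  also have "\<dots> = lift_commutator [^]\<^bsub>E\<^esub> Suc k"
    using E.commutes_pow[OF _ _ lift_a_commutes_lift_commutator, of k]
    by (simp add: E.m_assoc E.nat_pow_Suc E.mult_inv_cancel_left[symmetric])
  finally show ?case .
qed

lemma commutes_generators_imp_center:
  assumes "z \<in> carrier G" "z \<otimes> a = a \<otimes> z" "z \<otimes> b = b \<otimes> z"
  shows "z \<in> group_center G"
  unfolding group_center_def
proof (intro CollectI conjI ballI)
  fix g assume "g \<in> carrier G"
  then obtain i j :: nat where "g = a [^] i \<otimes> b [^] j"
    using monomial by blast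
  then show "z \<otimes> g = g \<otimes> z"
    using assms by (simp add: commutes_mult commutes_pow)
qed (rule assms(1))

lemma snd_ext_commutator:
  "x \<in> carrier E \<Longrightarrow> y \<in> carrier E \<Longrightarrow> snd (E.commutator x y) = commutator (snd x) (snd y)"
  unfolding E.commutator_def commutator_def by (simp add: snd_ext_mult snd_ext_inv snd_ext_closed)

lemma lift_commutator_nat_pow_in_ext_kernel:
  assumes "lift_commutator [^]\<^bsub>E\<^esub> (k::nat) \<in> ext_kernel"
  shows "lift_commutator [^]\<^bsub>E\<^esub> k = \<one>\<^bsub>E\<^esub>"
proof -
  have "commutator (a [^] k) b = \<one>"
    using assms snd_ext_commutator[of "lift a [^]\<^bsub>E\<^esub> k" "lift b"]
    unfolding commutator_lift_a_pow ext_kernel_def by (simp add: snd_ext_pow)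
  then have "a [^] k \<in> group_center G"
    using nat_pow_Suc[of a k] nat_pow_Suc2[of a k]
    by (intro commutes_generators_imp_center) (simp_all add: commutator_eq_one_iff)
  then have "lift a [^]\<^bsub>E\<^esub> k \<otimes>\<^bsub>E\<^esub> lift b = lift b \<otimes>\<^bsub>E\<^esub> lift a [^]\<^bsub>E\<^esub> k"
    by (intro central_lift_commutes) (simp_all add: snd_ext_pow)
  then show ?thesis
    unfolding commutator_lift_a_pow[symmetric] by (simp add: E.commutator_eq_one_iff)
qed

lemma lift_commutator_pow_in_ext_kernel:
  assumes "lift_commutator [^]\<^bsub>E\<^esub> (k::int) \<in> ext_kernel"
  shows "lift_commutator [^]\<^bsub>E\<^esub> k = \<one>\<^bsub>E\<^esub>"
proof (cases k rule: int_cases)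
  case (nonneg n)
  then show ?thesis
    using lift_commutator_nat_pow_in_ext_kernel[of n] assms by (simp add: int_pow_int)
next
  case (neg n)
  then have inv: "lift_commutator [^]\<^bsub>E\<^esub> k = inv\<^bsub>E\<^esub> (lift_commutator [^]\<^bsub>E\<^esub> Suc n)"
    by (simp add: E.int_pow_neg_int del: of_nat_Suc)
  have "lift_commutator [^]\<^bsub>E\<^esub> Suc n \<in> ext_kernel"
    using assms unfolding inv ext_kernel_def by (simp add: snd_ext_inv snd_ext_closed del: E.nat_pow_Suc)
  then have "lift_commutator [^]\<^bsub>E\<^esub> Suc n = \<one>\<^bsub>E\<^esub>"
    by (rule lift_commutator_nat_pow_in_ext_kernel)
  then show ?thesis
    unfolding inv by simp
qed

lemma conj_lift_b_lift_commutator: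
  "lift b \<otimes>\<^bsub>E\<^esub> lift_commutator \<otimes>\<^bsub>E\<^esub> inv\<^bsub>E\<^esub> lift b = lift_commutator [^]\<^bsub>E\<^esub> int r"
proof -
  obtain \<alpha> where \<alpha>: "\<alpha> \<in> ext_kernel"
    "lift b \<otimes>\<^bsub>E\<^esub> lift a \<otimes>\<^bsub>E\<^esub> inv\<^bsub>E\<^esub> lift b = \<alpha> \<otimes>\<^bsub>E\<^esub> lift a [^]\<^bsub>E\<^esub> r"
    using conj_lift_a by blast
  then have "\<alpha> \<in> group_center E"
    using ext_kernel_subset ext_kernel_central unfolding group_center_def by blast
  have "lift b \<otimes>\<^bsub>E\<^esub> lift_commutator \<otimes>\<^bsub>E\<^esub> inv\<^bsub>E\<^esub> lift b
      = E.commutator (\<alpha> \<otimes>\<^bsub>E\<^esub> lift a [^]\<^bsub>E\<^esub> r) (lift b)"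
    unfolding lift_commutator_def \<alpha>(2)[symmetric] by (simp add: E.conj_commutator)
  also have "\<dots> = E.commutator (lift a [^]\<^bsub>E\<^esub> r) (lift b)"
    using \<open>\<alpha> \<in> group_center E\<close> by (simp add: E.commutator_mult_central_left)
  finally show ?thesis
    by (simp add: commutator_lift_a_pow int_pow_int)
qed

lemma conj_lift_commutator:
  assumes "x \<in> carrier E"
  shows "\<exists>e::int. x \<otimes>\<^bsub>E\<^esub> lift_commutator \<otimes>\<^bsub>E\<^esub> inv\<^bsub>E\<^esub> x = lift_commutator [^]\<^bsub>E\<^esub> e"
proof -
  obtain \<beta> and i j :: nat where \<beta>: "\<beta> \<in> ext_kernel"
    and x: "x = \<beta> \<otimes>\<^bsub>E\<^esub> (lift a [^]\<^bsub>E\<^esub> i \<otimes>\<^bsub>E\<^esub> lift b [^]\<^bsub>E\<^esub> j)"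
    using ext_monomial[OF assms] by blast
  have \<beta>_closed: "\<beta> \<in> carrier E"
    using \<beta> ext_kernel_subset by blast
  have "\<beta> \<otimes>\<^bsub>E\<^esub> lift_commutator \<otimes>\<^bsub>E\<^esub> inv\<^bsub>E\<^esub> \<beta> = lift_commutator [^]\<^bsub>E\<^esub> (1::int)"
    using \<beta>_closed ext_kernel_central[OF \<beta>, of lift_commutator] by (simp add: E.m_assoc)
  moreover have "lift a \<otimes>\<^bsub>E\<^esub> lift_commutator \<otimes>\<^bsub>E\<^esub> inv\<^bsub>E\<^esub> lift a = lift_commutator [^]\<^bsub>E\<^esub> (1::int)"
    unfolding lift_a_commutes_lift_commutator by (simp add: E.m_assoc)
  ultimately have "x \<otimes>\<^bsub>E\<^esub> lift_commutator \<otimes>\<^bsub>E\<^esub> inv\<^bsub>E\<^esub> x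
      = lift_commutator [^]\<^bsub>E\<^esub> (1 * (1 ^ i * int r ^ j))"
    unfolding x using \<beta>_closed conj_lift_b_lift_commutator
    by (intro E.conj_mult_int_pow E.conj_nat_pow_int_pow) simp_all
  then show ?thesis
    by blast
qed

definition commutator_powers :: "(('a \<times> 'a \<Rightarrow> int) set \<times> 'a) set" where
  "commutator_powers = range (\<lambda>k::int. lift_commutator [^]\<^bsub>E\<^esub> k)"

lemma commutator_powers_normal: "commutator_powers \<lhd> E"
  unfolding E.normal_inv_iff
proof (intro conjI ballI)
  show "subgroup commutator_powers E"
    unfolding commutator_powers_def by (simp add: E.subgroup_of_powers)
  fix x h assume "x \<in> carrier E" "h \<in> commutator_powers"
  then obtain m e :: int where "h = lift_commutator [^]\<^bsub>E\<^esub> m"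
    "x \<otimes>\<^bsub>E\<^esub> lift_commutator \<otimes>\<^bsub>E\<^esub> inv\<^bsub>E\<^esub> x = lift_commutator [^]\<^bsub>E\<^esub> e"
    using conj_lift_commutator unfolding commutator_powers_def by blast
  with \<open>x \<in> carrier E\<close> show "x \<otimes>\<^bsub>E\<^esub> h \<otimes>\<^bsub>E\<^esub> inv\<^bsub>E\<^esub> x \<in> commutator_powers"
    unfolding commutator_powers_def by (simp add: E.conj_int_pow E.int_pow_pow)
qed

lemma commutator_powers_inter_ext_kernel:
  "x \<in> commutator_powers \<Longrightarrow> x \<in> ext_kernel \<Longrightarrow> x = \<one>\<^bsub>E\<^esub>"
  unfolding commutator_powers_def using lift_commutator_pow_in_ext_kernel by blast

sublocale N: normal commutator_powers E
  by (rule commutator_powers_normal)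

abbreviation Q where "Q \<equiv> E Mod commutator_powers"

sublocale Q: group Q
  by (rule N.factorgroup_is_group)

declare mult_FactGroup [simp del] one_FactGroup [simp del]

definition to_quot :: "('a \<times> 'a \<Rightarrow> int) set \<times> 'a \<Rightarrow> (('a \<times> 'a \<Rightarrow> int) set \<times> 'a) set" where
  "to_quot x = commutator_powers #>\<^bsub>E\<^esub> x"

lemma to_quot_hom: "to_quot \<in> hom E Q"
  unfolding to_quot_def by (rule N.r_coset_hom_Mod)

lemma to_quot_closed [simp]: "x \<in> carrier E \<Longrightarrow> to_quot x \<in> carrier Q"
  using to_quot_hom unfolding hom_def by auto

lemma to_quot_mult:
  "x \<in> carrier E \<Longrightarrow> y \<in> carrier E \<Longrightarrow> to_quot (x \<otimes>\<^bsub>E\<^esub> y) = to_quot x \<otimes>\<^bsub>Q\<^esub> to_quot y"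
  using to_quot_hom unfolding hom_def by auto

lemma to_quot_pow: "x \<in> carrier E \<Longrightarrow> to_quot (x [^]\<^bsub>E\<^esub> (n::nat)) = to_quot x [^]\<^bsub>Q\<^esub> n"
  using hom_nat_pow[OF to_quot_hom _ E.is_group Q.is_group] by blast

lemma carrier_quot: "carrier Q = to_quot ` carrier E"
  unfolding to_quot_def carrier_FactGroup by simp

lemma to_quot_eq_one_iff: "x \<in> carrier E \<Longrightarrow> to_quot x = \<one>\<^bsub>Q\<^esub> \<longleftrightarrow> x \<in> commutator_powers"
  unfolding to_quot_def one_FactGroup
  using E.rcos_self[OF _ N.subgroup_axioms] subgroup.rcos_const[OF N.subgroup_axioms E.is_group]
  by blast

lemma to_quot_lift_commutator: "to_quot lift_commutator = \<one>\<^bsub>Q\<^esub>"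
proof -
  have "lift_commutator \<in> commutator_powers"
    unfolding commutator_powers_def by (rule range_eqI[of _ _ 1]) simp
  then show ?thesis
    using to_quot_eq_one_iff by simp
qed

lemma comm_group_quot: "comm_group Q"
proof (rule Q.comm_groupI_central_monomials)
  have "lift a \<otimes>\<^bsub>E\<^esub> lift b = lift_commutator \<otimes>\<^bsub>E\<^esub> (lift b \<otimes>\<^bsub>E\<^esub> lift a)"
    unfolding lift_commutator_def E.commutator_def by (simp add: E.m_assoc E.inv_mult_cancel_left)
  then have "to_quot (lift a \<otimes>\<^bsub>E\<^esub> lift b) = to_quot (lift b \<otimes>\<^bsub>E\<^esub> lift a)"
    by (simp add: to_quot_mult to_quot_lift_commutator)
  then show "to_quot (lift a) \<otimes>\<^bsub>Q\<^esub> to_quot (lift b) = to_quot (lift b) \<otimes>\<^bsub>Q\<^esub> to_quot (lift a)"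
    by (simp add: to_quot_mult)
next
  fix u assume "u \<in> carrier Q"
  then obtain x where x: "x \<in> carrier E" "u = to_quot x"
    unfolding carrier_quot by blast
  obtain \<beta> and i j :: nat where \<beta>: "\<beta> \<in> ext_kernel"
    and "x = \<beta> \<otimes>\<^bsub>E\<^esub> (lift a [^]\<^bsub>E\<^esub> i \<otimes>\<^bsub>E\<^esub> lift b [^]\<^bsub>E\<^esub> j)"
    using ext_monomial[OF x(1)] by blast
  then have "u = to_quot \<beta> \<otimes>\<^bsub>Q\<^esub> (to_quot (lift a) [^]\<^bsub>Q\<^esub> i \<otimes>\<^bsub>Q\<^esub> to_quot (lift b) [^]\<^bsub>Q\<^esub> j)"
    using x(2) \<beta> ext_kernel_subset by (auto simp: to_quot_mult to_quot_pow)
  moreover have "to_quot \<beta> \<in> group_center Q"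
    unfolding group_center_def carrier_quot
    using \<beta> ext_kernel_subset ext_kernel_central[OF \<beta>] by (auto simp: to_quot_mult[symmetric])
  ultimately show "\<exists>c \<in> group_center Q. \<exists>(i::nat) (j::nat).
      u = c \<otimes>\<^bsub>Q\<^esub> (to_quot (lift a) [^]\<^bsub>Q\<^esub> i \<otimes>\<^bsub>Q\<^esub> to_quot (lift b) [^]\<^bsub>Q\<^esub> j)"
    by blast
qed simp_all

sublocale Q: comm_group Q
  by (rule comm_group_quot)

definition vertex_product :: "('a \<Rightarrow> int) \<Rightarrow> (('a \<times> 'a \<Rightarrow> int) set \<times> 'a) set" where
  "vertex_product v = finprod Q (\<lambda>g. to_quot (lift g) [^]\<^bsub>Q\<^esub> v g) (carrier G)"

lemma vertex_product_closed: "vertex_product v \<in> carrier Q"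
  unfolding vertex_product_def by (simp add: Q.finprod_closed)

lemma vertex_product_add:
  "vertex_product (\<lambda>g. v1 g + v2 g) = vertex_product v1 \<otimes>\<^bsub>Q\<^esub> vertex_product v2"
proof -
  have "vertex_product (\<lambda>g. v1 g + v2 g) = finprod Q (\<lambda>g. to_quot (lift g) [^]\<^bsub>Q\<^esub> v1 g
      \<otimes>\<^bsub>Q\<^esub> to_quot (lift g) [^]\<^bsub>Q\<^esub> v2 g) (carrier G)"
    unfolding vertex_product_def by (rule Q.finprod_cong') (simp_all add: Q.int_pow_mult)
  also have "\<dots> = vertex_product v1 \<otimes>\<^bsub>Q\<^esub> vertex_product v2"
    unfolding vertex_product_def by (rule Q.finprod_multf) simp_all
  finally show ?thesis .
qed

lemma vertex_product_uminus: "vertex_product (\<lambda>g. - v g) = inv\<^bsub>Q\<^esub> vertex_product v"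
proof -
  have "vertex_product (\<lambda>g. - v g) \<otimes>\<^bsub>Q\<^esub> vertex_product v = vertex_product (\<lambda>g. 0)"
    using vertex_product_add[of "\<lambda>g. - v g" v] by simp
  also have "\<dots> = \<one>\<^bsub>Q\<^esub>"
    unfolding vertex_product_def by simp
  finally show ?thesis
    using vertex_product_closed by (intro Q.inv_equality[THEN sym])
qed

lemma vertex_product_basis_chain:
  assumes "g \<in> carrier G"
  shows "vertex_product (basis_chain g) = to_quot (lift g)"
proof -
  have "vertex_product (basis_chain g)
      = finprod Q (\<lambda>x. if g = x then to_quot (lift x) else \<one>\<^bsub>Q\<^esub>) (carrier G)"
    unfolding vertex_product_def by (rule Q.finprod_cong') (auto simp: basis_chain_def)
  also have "\<dots> = to_quot (lift g)"
    using assms by (intro Q.finprod_singleton[OF assms finite_carrier]) simp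
  finally show ?thesis .
qed

lemma vertex_product_bd2_basis_chain:
  assumes "g \<in> carrier G" "h \<in> carrier G"
  shows "vertex_product (bd2 G (basis_chain (g, h)))
    = to_quot (lift g) \<otimes>\<^bsub>Q\<^esub> to_quot (lift h) \<otimes>\<^bsub>Q\<^esub> inv\<^bsub>Q\<^esub> to_quot (lift (g \<otimes> h))"
proof -
  have "vertex_product (bd2 G (basis_chain (g, h)))
      = vertex_product (basis_chain h) \<otimes>\<^bsub>Q\<^esub> vertex_product (\<lambda>x. - basis_chain (g \<otimes> h) x)
        \<otimes>\<^bsub>Q\<^esub> vertex_product (basis_chain g)"
    unfolding bd2_basis_chain[OF finite_carrier assms] vertex_product_add[symmetric] by simp
  then show ?thesis
    using assms by (simp add: vertex_product_uminus vertex_product_basis_chain Q.m_ac)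
qed

definition chain_image :: "('a \<times> 'a \<Rightarrow> int) \<Rightarrow> (('a \<times> 'a \<Rightarrow> int) set \<times> 'a) set" where
  "chain_image w = to_quot (kernel_elem w)"

lemma chain_image_closed: "chain_image w \<in> carrier Q"
  unfolding chain_image_def by simp

lemma chain_image_add: "chain_image (\<lambda>q. w1 q + w2 q) = chain_image w1 \<otimes>\<^bsub>Q\<^esub> chain_image w2"
  unfolding chain_image_def kernel_elem_add by (rule to_quot_mult) simp_all

lemma chain_image_basis_chain:
  assumes "g \<in> carrier G" "h \<in> carrier G"
  shows "chain_image (basis_chain (g, h))
    = to_quot (lift g) \<otimes>\<^bsub>Q\<^esub> to_quot (lift h) \<otimes>\<^bsub>Q\<^esub> inv\<^bsub>Q\<^esub> to_quot (lift (g \<otimes> h))"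
proof -
  have "chain_image (basis_chain (g, h)) \<otimes>\<^bsub>Q\<^esub> to_quot (lift (g \<otimes> h))
      = to_quot (lift g) \<otimes>\<^bsub>Q\<^esub> to_quot (lift h)"
    unfolding chain_image_def using assms
    by (simp add: to_quot_mult[symmetric] kernel_elem_basis_chain)
  then show ?thesis
    using assms chain_image_closed by (simp add: Q.inv_solve_right)
qed

lemma chain_image_eq_vertex_product_bd2:
  assumes "\<And>q. w q \<noteq> 0 \<Longrightarrow> q \<in> carrier G \<times> carrier G"
  shows "chain_image w = vertex_product (bd2 G w)"
proof (rule Q.additive_maps_eq_on_supported[OF _ _ _ _ _ _ assms])
  show "\<And>p. p \<in> carrier G \<times> carrier G \<Longrightarrow> chain_image (basis_chain p) = vertex_product (bd2 G (basis_chain p))"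
    by (auto simp: chain_image_basis_chain vertex_product_bd2_basis_chain)
qed (simp_all add: chain_image_add chain_image_closed bd2_add vertex_product_add
    vertex_product_closed finite_carrier)

lemma cycles2_subset_ganea_span: "cycles2 G \<subseteq> ganea_span G"
proof
  fix c assume "c \<in> cycles2 G"
  then have "chain_image c = vertex_product (\<lambda>g. 0)"
    using chain_image_eq_vertex_product_bd2[of c] unfolding cycles2_def chains2_def by auto
  then have "to_quot (kernel_elem c) = \<one>\<^bsub>Q\<^esub>"
    unfolding chain_image_def vertex_product_def by simp
  then have "kernel_elem c \<in> commutator_powers"
    using kernel_elem_in_ext_kernel ext_kernel_subset to_quot_eq_one_iff by blast
  then have "kernel_elem c = \<one>\<^bsub>E\<^esub>"
    using commutator_powers_inter_ext_kernel kernel_elem_in_ext_kernel by blast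
  then show "c \<in> ganea_span G"
    unfolding kernel_elem_eq_one_iff .
qed

end

theorem proposition3p1:
  fixes G :: "('a, 'b) monoid_scheme"
  assumes "group G" and "finite (carrier G)" and "metacyclic G"
  shows "ganea_epi G"
proof -
  interpret finite_group G
    using assms(1,2) by (simp add: finite_group_def finite_group_axioms_def)
  obtain a b r where "metacyclic_generators G a b r"
    using obtain_metacyclic_generators[OF assms(3)] .
  then interpret metacyclic_generators G a b r .
  show ?thesis
    unfolding ganea_epi_iff_cycles2_subset by (rule cycles2_subset_ganea_span)
qed

end
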